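(* Let $H$ be an almost-breakable monoid. If $H$ is twisted or bridged, then $\mathcal{P}_{\mathrm{fin},1}(H)$ is not UmF.
   Context: A monoid $H$ is almost-breakable if for all $x,y\in H$, $xy\in\{x,y\}$ or $yx\in\{x,y\}$. An ordered pair $(x,y)\in H\times H$ is balanced if $xy\in\{x,y\}$, unbalanced otherwise. $H$ is twisted if there exist unbalanced pairs $(x,y)$ and $(z,w)$ with $\{x,y\}\cap\{z,w\}=\emptyset$, $xy\in\{z,w\}$ and $zw\in\{x,y\}$. $H$ is bridged if there exist $x_1,x_2,x_3\in H$ such that $(x_1,x_2)$, $(x_2,x_3)$, $(x_1,x_3)$ are unbalanced pairs and $x_1x_3\notin\{x_1x_2,x_2x_3\}$. $\mathcal{P}_{\mathrm{fin},1}(H)$ denotes the set of non-empty finite subsets of $H$ containing $1_H$, a monoid under $XY=\{xy:x\in X,y\in Y\}$. In a monoid $M$: $x\mid_M y$ iff $y\in MxM$; $x,y$ are associated if each divides the other; proper divisor means divides but not associated. A unit-divisor divides $1_M$; otherwise it is a non-unit-divisor. An irreducible is a non-unit-divisor $a$ with $a\neq xy$ for all non-unit-divisors $x,y$ properly dividing $a$. A factorization of $x$ is a finite word over the irreducibles with product $x$. For words $\mathfrak a,\mathfrak b$, $\mathfrak a\sqsubseteq\mathfrak b$ means $\mathfrak a$ is, up to associatedness of letters, a subword (subsequence) of some permutation of $\mathfrak b$; equivalence means $\sqsubseteq$ both ways. A factorization $\mathfrak a$ of $x$ is minimal if no factorization $\mathfrak b$ of $x$ satisfies $\mathfrak b\sqsubseteq\mathfrak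 a\not\sqsubseteq\mathfrak b$. $M$ is UmF if every non-unit-divisor has a factorization and any two minimal factorizations of an element are equivalent. *)

theory Defs
  imports Main "HOL-Library.Multiset" "HOL-Library.Sublist"
begin

definition balanced :: "'a::monoid_mult \<Rightarrow> 'a \<Rightarrow> bool" where
  "balanced x y \<longleftrightarrow> x * y \<in> {x, y}"

definition almost_breakable :: "'a::monoid_mult itself \<Rightarrow> bool" where
  "almost_breakable _ \<longleftrightarrow> (\<forall>x y :: 'a. x * y \<in> {x, y} \<or> y * x \<in> {x, y})"

definition twisted :: "'a::monoid_mult itself \<Rightarrow> bool" where
  "twisted _ \<longleftrightarrow> (\<exists>x y z w :: 'a. \<not> balanced x y \<and> \<not> balanced z w \<and>
      {x, y} \<inter> {z, w} = {} \<and> x * y \<in> {z, w} \<and> z * w \<in> {x, y})"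

definition bridged :: "'a::monoid_mult itself \<Rightarrow> bool" where
  "bridged _ \<longleftrightarrow> (\<exists>x1 x2 x3 :: 'a. \<not> balanced x1 x2 \<and> \<not> balanced x2 x3 \<and>
      \<not> balanced x1 x3 \<and> x1 * x3 \<notin> {x1 * x2, x2 * x3})"

definition Pfin1 :: "'a::monoid_mult set set" where
  "Pfin1 = {X. finite X \<and> X \<noteq> {} \<and> 1 \<in> X}"

definition setmult :: "'a::monoid_mult set \<Rightarrow> 'a set \<Rightarrow> 'a set" where
  "setmult X Y = {x * y | x y. x \<in> X \<and> y \<in> Y}"

definition mdvd :: "'b set \<Rightarrow> ('b \<Rightarrow> 'b \<Rightarrow> 'b) \<Rightarrow> 'b \<Rightarrow> 'b \<Rightarrow> bool" where
  "mdvd M f x y \<longleftrightarrow> (\<exists>a\<in>M. \<exists>b\<in>M. y = f (f a x) b)"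

definition massoc :: "'b set \<Rightarrow> ('b \<Rightarrow> 'b \<Rightarrow> 'b) \<Rightarrow> 'b \<Rightarrow> 'b \<Rightarrow> bool" where
  "massoc M f x y \<longleftrightarrow> mdvd M f x y \<and> mdvd M f y x"

definition mproper_dvd :: "'b set \<Rightarrow> ('b \<Rightarrow> 'b \<Rightarrow> 'b) \<Rightarrow> 'b \<Rightarrow> 'b \<Rightarrow> bool" where
  "mproper_dvd M f x y \<longleftrightarrow> mdvd M f x y \<and> \<not> massoc M f x y"

definition unit_divisor :: "'b set \<Rightarrow> ('b \<Rightarrow> 'b \<Rightarrow> 'b) \<Rightarrow> 'b \<Rightarrow> 'b \<Rightarrow> bool" where
  "unit_divisor M f e x \<longleftrightarrow> mdvd M f x e"

definition mirreducible :: "'b set \<Rightarrow> ('b \<Rightarrow> 'b \<Rightarrow> 'b) \<Rightarrow> 'b \<Rightarrow> 'b \<Rightarrow> bool" where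
  "mirreducible M f e a \<longleftrightarrow> a \<in> M \<and> \<not> unit_divisor M f e a \<and>
     \<not> (\<exists>x\<in>M. \<exists>y\<in>M. \<not> unit_divisor M f e x \<and> \<not> unit_divisor M f e y \<and>
          mproper_dvd M f x a \<and> mproper_dvd M f y a \<and> a = f x y)"

definition word_prod :: "('b \<Rightarrow> 'b \<Rightarrow> 'b) \<Rightarrow> 'b \<Rightarrow> 'b list \<Rightarrow> 'b" where
  "word_prod f e w = foldr f w e"

definition factorization :: "'b set \<Rightarrow> ('b \<Rightarrow> 'b \<Rightarrow> 'b) \<Rightarrow> 'b \<Rightarrow> 'b list \<Rightarrow> 'b \<Rightarrow> bool" where
  "factorization M f e w x \<longleftrightarrow> (\<forall>a\<in>set w. mirreducible M f e a) \<and> word_prod f e w = x"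

definition word_le :: "'b set \<Rightarrow> ('b \<Rightarrow> 'b \<Rightarrow> 'b) \<Rightarrow> 'b list \<Rightarrow> 'b list \<Rightarrow> bool" where
  "word_le M f a b \<longleftrightarrow> (\<exists>p s. mset p = mset b \<and> subseq s p \<and> list_all2 (massoc M f) a s)"

definition word_equiv :: "'b set \<Rightarrow> ('b \<Rightarrow> 'b \<Rightarrow> 'b) \<Rightarrow> 'b list \<Rightarrow> 'b list \<Rightarrow> bool" where
  "word_equiv M f a b \<longleftrightarrow> word_le M f a b \<and> word_le M f b a"

definition minimal_factorization ::
  "'b set \<Rightarrow> ('b \<Rightarrow> 'b \<Rightarrow> 'b) \<Rightarrow> 'b \<Rightarrow> 'b list \<Rightarrow> 'b \<Rightarrow> bool" where
  "minimal_factorization M f e a x \<longleftrightarrow> factorization M f e a x \<and>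
     \<not> (\<exists>b. factorization M f e b x \<and> word_le M f b a \<and> \<not> word_le M f a b)"

definition UmF :: "'b set \<Rightarrow> ('b \<Rightarrow> 'b \<Rightarrow> 'b) \<Rightarrow> 'b \<Rightarrow> bool" where
  "UmF M f e \<longleftrightarrow>
     (\<forall>x\<in>M. \<not> unit_divisor M f e x \<longrightarrow> (\<exists>w. factorization M f e w x)) \<and>
     (\<forall>x\<in>M. \<forall>a b. minimal_factorization M f e a x \<and> minimal_factorization M f e b x
        \<longrightarrow> word_equiv M f a b)"

end

theory Submission
  imports Defs
begin

text \<open>
  Every element of \<open>Pfin1\<close> contains \<open>1\<close>, so divisibility there is inclusion: associated
  elements are equal, \<open>{1}\<close> is the only unit-divisor and every \<open>{1, u}\<close> with \<open>u \<noteq> 1\<close> is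
  irreducible. Minimal factorizations are thus compared as multisets of letters, and a
  product of \<open>n\<close> letters \<open>{1, u}\<close> has at most \<open>2\<^sup>n\<close> elements, so a factorization of a
  large set into such letters cannot be shortened.

  An almost-breakable monoid is idempotent. In the twisted case with \<open>xy = z\<close>, \<open>zw = x\<close>
  this gives \<open>{1,x}{1,y}{1,w} = {1,z}{1,y}{1,w} = {1,x,y,z,w,yw}\<close>, a set with at least five
  elements; the case \<open>xy = w\<close>, \<open>zw = y\<close> is similar and the other two are impossible. In
  the bridged case \<open>{1,b}{1,c}{1,a}{1,b} = {1,c}{1,bc}{1,a}{1,b} = {1,a,b,c,ab,bc}\<close>, and
  no product of three of the letters \<open>{1,a}, {1,b}, {1,c}, {1,bc}\<close> yields this set: one
  containing \<open>a, b, c, ab, bc\<close> always contains \<open>ac\<close> as well.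
\<close>

lemma setmult_one_left [simp]: "setmult {1} X = X"
  unfolding setmult_def by auto

lemma setmult_one_right [simp]: "setmult X {1} = X"
  unfolding setmult_def by auto

lemma setmult_in_Pfin1:
  assumes "X \<in> Pfin1" "Y \<in> Pfin1"
  shows "setmult X Y \<in> Pfin1"
proof -
  have "setmult X Y = (\<lambda>(x, y). x * y) ` (X \<times> Y)"
    unfolding setmult_def by auto
  moreover have "1 * 1 \<in> setmult X Y"
    using assms unfolding setmult_def Pfin1_def by blast
  ultimately show ?thesis
    using assms unfolding Pfin1_def by auto
qed

lemma word_prod_Nil [simp]: "word_prod f e [] = e"
  by (simp add: word_prod_def)

lemma word_prod_Cons [simp]: "word_prod f e (a # w) = f a (word_prod f e w)"
  by (simp add: word_prod_def)

lemma mdvd_Pfin1_refl: "mdvd Pfin1 setmult X X"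
proof -
  have "{1} \<in> Pfin1"
    unfolding Pfin1_def by simp
  then show ?thesis
    unfolding mdvd_def by force
qed

lemma mdvd_Pfin1_imp_subset:
  assumes "mdvd Pfin1 setmult X Y"
  shows "X \<subseteq> Y"
proof
  fix x assume "x \<in> X"
  obtain A B where "A \<in> Pfin1" "B \<in> Pfin1" "Y = setmult (setmult A X) B"
    using assms unfolding mdvd_def by blast
  then have "1 * x \<in> setmult A X" "1 \<in> B"
    using \<open>x \<in> X\<close> unfolding setmult_def Pfin1_def by blast+
  then have "1 * x * 1 \<in> Y"
    using \<open>Y = setmult (setmult A X) B\<close> unfolding setmult_def by blast
  then show "x \<in> Y"
    by simp
qed

lemma massoc_Pfin1_iff: "massoc Pfin1 setmult X Y \<longleftrightarrow> X = Y"
  unfolding massoc_def using mdvd_Pfin1_imp_subset mdvd_Pfin1_refl by blast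

lemma unit_divisor_Pfin1_iff:
  assumes "X \<in> Pfin1"
  shows "unit_divisor Pfin1 setmult {1} X \<longleftrightarrow> X = {1}"
proof
  assume "unit_divisor Pfin1 setmult {1} X"
  then have "X \<subseteq> {1}"
    unfolding unit_divisor_def by (rule mdvd_Pfin1_imp_subset)
  with assms show "X = {1}"
    unfolding Pfin1_def by blast
qed (simp add: unit_divisor_def mdvd_Pfin1_refl)

lemma mirreducible_pair:
  assumes "u \<noteq> 1"
  shows "mirreducible Pfin1 setmult {1} {1, u}"
proof -
  have no_proper_divisor: "X = {1}" if "X \<in> Pfin1" "mproper_dvd Pfin1 setmult X {1, u}" for X
  proof -
    have "X \<subseteq> {1, u}" "X \<noteq> {1, u}" "1 \<in> X"
      using that mdvd_Pfin1_imp_subset massoc_Pfin1_iff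
      unfolding mproper_dvd_def Pfin1_def by auto
    then show ?thesis
      by blast
  qed
  have "{1, u} \<in> Pfin1"
    unfolding Pfin1_def by simp
  with assms no_proper_divisor show ?thesis
    unfolding mirreducible_def by (auto simp: unit_divisor_Pfin1_iff)
qed

lemma subseq_imp_subset_mset: "subseq xs ys \<Longrightarrow> mset xs \<subseteq># mset ys"
  by (induction rule: list_emb.induct) (auto intro: subset_mset.order_trans)

lemma word_le_iff_subset_mset:
  assumes massoc_eq: "\<And>x y. massoc M f x y \<longleftrightarrow> x = y"
  shows "word_le M f a b \<longleftrightarrow> mset a \<subseteq># mset b"
proof
  assume "word_le M f a b"
  then obtain p where "mset p = mset b" "subseq a p"
    unfolding word_le_def massoc_eq list.rel_eq by blast
  then show "mset a \<subseteq># mset b"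
    using subseq_imp_subset_mset by metis
next
  assume "mset a \<subseteq># mset b"
  obtain r where "mset r = mset b - mset a"
    using ex_mset by blast
  then have "mset (a @ r) = mset b" "subseq a (a @ r)"
    using \<open>mset a \<subseteq># mset b\<close> by auto
  then show "word_le M f a b"
    unfolding word_le_def massoc_eq list.rel_eq by blast
qed

lemma word_equiv_iff_mset_eq:
  assumes "\<And>x y. massoc M f x y \<longleftrightarrow> x = y"
  shows "word_equiv M f a b \<longleftrightarrow> mset a = mset b"
  unfolding word_equiv_def word_le_iff_subset_mset[OF assms] by auto

lemma factorization_Pfin1_in_Pfin1:
  assumes "factorization Pfin1 setmult {1} w X"
  shows "X \<in> Pfin1"
  using assms unfolding factorization_def
proof (induction w arbitrary: X)
  case Nil
  then show ?case
    unfolding Pfin1_def by auto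
next
  case (Cons A w)
  then have "A \<in> Pfin1" "word_prod setmult {1} w \<in> Pfin1" "X = setmult A (word_prod setmult {1} w)"
    by (simp_all add: mirreducible_def)
  then show ?case
    by (simp add: setmult_in_Pfin1)
qed

lemma minimal_factorization_Pfin1I:
  assumes "factorization Pfin1 setmult {1} w X"
    and "\<And>v. mset v \<subset># mset w \<Longrightarrow> factorization Pfin1 setmult {1} v X \<Longrightarrow> False"
  shows "minimal_factorization Pfin1 setmult {1} w X"
  unfolding minimal_factorization_def word_le_iff_subset_mset[OF massoc_Pfin1_iff]
  using assms by (auto simp: subset_mset.less_le_not_le)

lemma not_UmF_Pfin1I:
  fixes X :: "'a::monoid_mult set"
  assumes "minimal_factorization Pfin1 setmult {1} v X"
    and "minimal_factorization Pfin1 setmult {1} w X"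
    and "mset v \<noteq> mset w"
  shows "\<not> UmF (Pfin1 :: 'a set set) setmult {1}"
proof
  assume "UmF (Pfin1 :: 'a set set) setmult {1}"
  moreover have "X \<in> Pfin1"
    using assms(1) factorization_Pfin1_in_Pfin1 unfolding minimal_factorization_def by blast
  ultimately have "word_equiv Pfin1 setmult v w"
    using assms(1,2) unfolding UmF_def by blast
  with assms(3) show False
    by (simp add: word_equiv_iff_mset_eq[OF massoc_Pfin1_iff])
qed

definition pair_word :: "'a::monoid_mult list \<Rightarrow> 'a set list" where
  "pair_word us = map (\<lambda>u. {1, u}) us"

definition pair_prod :: "'a::monoid_mult list \<Rightarrow> 'a set" where
  "pair_prod us = word_prod setmult {1} (pair_word us)"

lemma pair_prod_Nil [simp]: "pair_prod [] = {1}"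
  by (simp add: pair_prod_def pair_word_def)

lemma setmult_pair_left: "setmult {1, u} Y = Y \<union> (*) u ` Y"
  unfolding setmult_def by auto (metis mult_1_left)

lemma pair_prod_Cons [simp]: "pair_prod (u # us) = pair_prod us \<union> (*) u ` pair_prod us"
  by (simp add: pair_prod_def pair_word_def setmult_pair_left)

lemma finite_pair_prod [simp]: "finite (pair_prod us)"
  by (induction us) simp_all

lemma card_pair_prod_le: "card (pair_prod us) \<le> 2 ^ length us"
proof (induction us)
  case (Cons u us)
  have "card (pair_prod (u # us)) \<le> card (pair_prod us) + card ((*) u ` pair_prod us)"
    by (simp add: card_Un_le)
  also have "\<dots> \<le> 2 * card (pair_prod us)"
    using card_image_le[of "pair_prod us" "(*) u"] by simp
  finally show ?case
    using Cons.IH by simp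
qed simp

lemma set_pair_word: "set (pair_word us) = (\<lambda>u. {1, u}) ` set us"
  by (simp add: pair_word_def)

lemma pair_eq_pair_iff [simp]: "{1, u} = {1, v} \<longleftrightarrow> u = v"
  by (auto simp: doubleton_eq_iff)

lemma mset_pair_word_neq:
  assumes "set us \<noteq> set vs"
  shows "mset (pair_word us) \<noteq> mset (pair_word vs)"
proof
  assume "mset (pair_word us) = mset (pair_word vs)"
  then have "(\<lambda>u. {1, u}) ` set us = (\<lambda>u. {1, u}) ` set vs"
    by (metis set_mset_mset set_pair_word)
  moreover have "inj (\<lambda>u. {1, u})"
    by (simp add: inj_def)
  ultimately show False
    using assms by (metis inj_image_eq_iff)
qed

text \<open>
  Subwords \<open>ts\<close> with \<open>2 ^ length ts < card (pair_prod us)\<close> cannot have the same product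
  by \<open>card_pair_prod_le\<close>, so only the remaining ones need to be checked.
\<close>

lemma minimal_factorization_pair_wordI:
  fixes us :: "'a::monoid_mult list"
  assumes no_unit: "1 \<notin> set us"
    and uncounted: "\<And>ts. set ts \<subseteq> set us \<Longrightarrow> length ts < length us \<Longrightarrow>
      card (pair_prod us) \<le> 2 ^ length ts \<Longrightarrow> pair_prod ts \<noteq> pair_prod us"
  shows "minimal_factorization Pfin1 setmult {1} (pair_word us) (pair_prod us)"
proof (rule minimal_factorization_Pfin1I)
  have "mirreducible Pfin1 setmult {1} A" if A: "A \<in> set (pair_word us)" for A
  proof -
    obtain u where "u \<in> set us" "A = {1, u}"
      using A unfolding set_pair_word by blast
    with no_unit show ?thesis
      using mirreducible_pair by metis
  qed
  then show "factorization Pfin1 setmult {1} (pair_word us) (pair_prod us)"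
    unfolding factorization_def pair_prod_def by blast
next
  fix v
  assume sub: "mset v \<subset># mset (pair_word us)"
    and fac: "factorization Pfin1 setmult {1} v (pair_prod us)"
  have letters: "set v \<subseteq> (\<lambda>u. {1, u}) ` set us"
    using set_mset_mono[OF subset_mset.less_imp_le[OF sub]] by (simp add: set_pair_word)
  then obtain ts where v: "v = pair_word ts"
    using ex_map_conv[of v "\<lambda>u. {1, u}"] unfolding pair_word_def by blast
  have "set ts \<subseteq> set us"
  proof
    fix t assume "t \<in> set ts"
    then have "{1, t} \<in> (\<lambda>u. {1, u}) ` set us"
      using letters by (auto simp: v pair_word_def)
    then show "t \<in> set us"
      by auto
  qed
  have "length ts < length us"
    using mset_subset_size[OF sub] by (simp add: v pair_word_def)
  moreover have "pair_prod ts = pair_prod us"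
    using fac by (simp add: v factorization_def pair_prod_def)
  ultimately have "2 ^ length ts < card (pair_prod us)"
    using uncounted[OF \<open>set ts \<subseteq> set us\<close>] not_less by blast
  with card_pair_prod_le[of ts] \<open>pair_prod ts = pair_prod us\<close> show False
    by simp
qed

lemma not_UmF_Pfin1_of_pair_prod_eq:
  fixes us vs :: "'a::monoid_mult list"
  assumes "1 \<notin> set us" "1 \<notin> set vs" "set us \<noteq> set vs" "length us = length vs"
    and "pair_prod us = pair_prod vs" "2 ^ (length us - 1) < card (pair_prod us)"
  shows "\<not> UmF (Pfin1 :: 'a set set) setmult {1}"
proof (rule not_UmF_Pfin1I)
  have counted: "pair_prod ts \<noteq> pair_prod us" if "length ts < length us" for ts :: "'a list"
  proof -
    have "(2::nat) ^ length ts \<le> 2 ^ (length us - 1)"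
      using that by (intro power_increasing) auto
    then have "card (pair_prod ts) \<le> 2 ^ (length us - 1)"
      using card_pair_prod_le[of ts] by linarith
    then show ?thesis
      using assms(6) by auto
  qed
  show "minimal_factorization Pfin1 setmult {1} (pair_word us) (pair_prod us)"
    by (rule minimal_factorization_pair_wordI) (use assms(1) counted in simp_all)
  have "minimal_factorization Pfin1 setmult {1} (pair_word vs) (pair_prod vs)"
    by (rule minimal_factorization_pair_wordI) (use assms(2,4,5) counted in simp_all)
  then show "minimal_factorization Pfin1 setmult {1} (pair_word vs) (pair_prod us)"
    using assms(5) by simp
  show "mset (pair_word us) \<noteq> mset (pair_word vs)"
    using assms(3) by (rule mset_pair_word_neq)
qed

lemma band_mult_left_absorb:
  fixes x y :: "'a::monoid_mult"
  assumes "\<And>t::'a. t * t = t"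
  shows "x * (x * y) = x * y"
  by (simp add: assms mult.assoc[symmetric])

lemma band_mult_right_absorb:
  fixes x y :: "'a::monoid_mult"
  assumes "\<And>t::'a. t * t = t"
  shows "x * y * y = x * y"
  by (simp add: assms mult.assoc)

lemma band_mult_eq_one:
  fixes x y :: "'a::monoid_mult"
  assumes "\<And>t::'a. t * t = t" and "x * y = 1"
  shows "x = 1"
  by (metis assms band_mult_left_absorb mult_1_right)

lemma band_mult_chain_absorb:
  fixes x y z w :: "'a::monoid_mult"
  assumes idem: "\<And>t::'a. t * t = t" and "x * y = z" "z * w = y"
  shows "z * w = z"
proof -
  have "z * w = x * (z * w) * w"
    using assms(2,3) by (simp add: mult.assoc)
  also have "\<dots> = x * (z * w)"
    using band_mult_right_absorb[OF idem, of "x * z" w] by (simp add: mult.assoc)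
  finally show ?thesis
    using assms(2,3) by simp
qed

lemma almost_breakable_idem:
  assumes "almost_breakable TYPE('a::monoid_mult)"
  shows "(x::'a) * x = x"
  using assms unfolding almost_breakable_def by auto

lemma almost_breakable_unbalanced_swap:
  assumes "almost_breakable TYPE('a::monoid_mult)" and "\<not> balanced (x::'a) y"
  shows "y * x \<in> {x, y}"
  using assms unfolding almost_breakable_def balanced_def by blast

lemma unbalanced_neq_one:
  assumes "\<not> balanced x y"
  shows "x \<noteq> 1" and "y \<noteq> 1"
  using assms unfolding balanced_def by auto

lemma almost_breakable_unbalanced_neq:
  assumes "almost_breakable TYPE('a::monoid_mult)" and "\<not> balanced (x::'a) y"
  shows "x \<noteq> y"
  using assms almost_breakable_idem unfolding balanced_def by fastforce

lemma twisted_pair_prods_of_mult_eq_left: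
  fixes x y z w :: "'a::monoid_mult"
  assumes idem: "\<And>t::'a. t * t = t" and xy: "x * y = z" and zw: "z * w = x"
  shows "pair_prod [x, y, w] = {1, x, y, z, w, y * w}"
    and "pair_prod [z, y, w] = {1, x, y, z, w, y * w}"
proof -
  have xw: "x * w = x" and xyw: "x * (y * w) = x"
    using band_mult_right_absorb[OF idem, of z w] xy zw by (simp_all add: mult.assoc[symmetric])
  have zy: "z * y = z" and zyw: "z * (y * w) = x"
    using band_mult_right_absorb[OF idem, of x y] xy zw by (simp_all add: mult.assoc[symmetric])
  show "pair_prod [x, y, w] = {1, x, y, z, w, y * w}"
    and "pair_prod [z, y, w] = {1, x, y, z, w, y * w}"
    by (auto simp: xy zw xw xyw zy zyw)
qed

lemma twisted_pair_prods_of_mult_eq_right: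
  fixes x y z w :: "'a::monoid_mult"
  assumes idem: "\<And>t::'a. t * t = t" and wz: "w * z \<in> {z, w}"
    and xy: "x * y = w" and zw: "z * w = y"
  shows "pair_prod [x, z, w] = {1, x, y, z, w, x * z}"
    and "pair_prod [x, y, z] = {1, x, y, z, w, x * z}"
proof -
  have xw: "x * w = w" and xzw: "x * (z * w) = w"
    using band_mult_left_absorb[OF idem, of x y] xy zw by simp_all
  have yz: "y * z \<in> {y, z}"
    using wz zw idem by (auto simp: mult.assoc)
  have xyz: "x * (y * z) = w * z"
    using xy by (simp add: mult.assoc[symmetric])
  show "pair_prod [x, z, w] = {1, x, y, z, w, x * z}"
    and "pair_prod [x, y, z] = {1, x, y, z, w, x * z}"
    using yz wz by (auto simp: xy zw xw xzw xyz)
qed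

lemma twisted_mult_cases:
  fixes x y z w :: "'a::monoid_mult"
  assumes idem: "\<And>t::'a. t * t = t"
    and "\<not> balanced x y" "\<not> balanced z w" "x * y \<in> {z, w}" "z * w \<in> {x, y}"
  shows "x * y = z \<and> z * w = x \<or> x * y = w \<and> z * w = y"
proof -
  have "z * w \<noteq> y" if "x * y = z"
    using band_mult_chain_absorb[OF idem that, of w] assms(3) unfolding balanced_def by auto
  moreover have "x * y \<noteq> w" if "z * w = x"
    using band_mult_chain_absorb[OF idem that, of y] assms(2) unfolding balanced_def by auto
  ultimately show ?thesis
    using assms(4,5) by auto
qed

lemma twisted_not_UmF:
  fixes x y z w :: "'a::monoid_mult"
  assumes ab: "almost_breakable TYPE('a)"
    and xy: "\<not> balanced x y" and zw: "\<not> balanced z w" and disjoint: "{x, y} \<inter> {z, w} = {}"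
    and "x * y \<in> {z, w}" "z * w \<in> {x, y}"
  shows "\<not> UmF (Pfin1 :: 'a set set) setmult {1}"
proof -
  have idem: "\<And>t::'a. t * t = t"
    using almost_breakable_idem[OF ab] .
  have distinct: "distinct [1, x, y, z, w]"
    using xy zw disjoint unbalanced_neq_one almost_breakable_unbalanced_neq[OF ab] by auto
  have big: "4 < card (pair_prod us)" if "set [1, x, y, z, w] \<subseteq> pair_prod us" for us
    using card_mono[OF finite_pair_prod that] distinct_card[OF distinct] by simp
  consider "x * y = z" "z * w = x" | "x * y = w" "z * w = y"
    using twisted_mult_cases[OF idem assms(2,3,5,6)] by blast
  then show ?thesis
  proof cases
    case 1
    note prods = twisted_pair_prods_of_mult_eq_left[OF idem 1]
    show ?thesis
    proof (rule not_UmF_Pfin1_of_pair_prod_eq[of "[x, y, w]" "[z, y, w]"])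
      show "pair_prod [x, y, w] = pair_prod [z, y, w]"
        using prods by simp
      show "2 ^ (length [x, y, w] - 1) < card (pair_prod [x, y, w])"
        using big[of "[x, y, w]"] unfolding prods by simp
      have "x \<notin> set [z, y, w]"
        using distinct by auto
      then show "set [x, y, w] \<noteq> set [z, y, w]"
        by auto
    qed (use distinct in auto)
  next
    case 2
    note prods = twisted_pair_prods_of_mult_eq_right[OF idem almost_breakable_unbalanced_swap[OF ab zw] 2]
    show ?thesis
    proof (rule not_UmF_Pfin1_of_pair_prod_eq[of "[x, z, w]" "[x, y, z]"])
      show "pair_prod [x, z, w] = pair_prod [x, y, z]"
        using prods by simp
      show "2 ^ (length [x, z, w] - 1) < card (pair_prod [x, z, w])"
        using big[of "[x, z, w]"] unfolding prods by simp
      have "w \<notin> set [x, y, z]"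
        using distinct by auto
      then show "set [x, z, w] \<noteq> set [x, y, z]"
        by auto
    qed (use distinct in auto)
  qed
qed

lemma bridged_mult_neq:
  fixes a b c :: "'a::monoid_mult"
  assumes idem: "\<And>t::'a. t * t = t"
    and ba: "b * a \<in> {a, b}" and cb: "c * b \<in> {b, c}" and ca: "c * a \<in> {a, c}"
    and "a * b \<noteq> b" "b * c \<noteq> b" "a * b \<noteq> c" "b * c \<noteq> a"
  shows "a * b \<noteq> b * c"
proof
  assume eq: "a * b = b * c"
  have "b * c = b * a * b"
    using band_mult_left_absorb[OF idem, of b c] eq by (simp add: mult.assoc)
  with ba assms(6) idem have ba: "b * a = a"
    by auto
  have "a * b = b * (c * b)"
    using band_mult_right_absorb[OF idem, of a b] eq by (simp add: mult.assoc)
  with cb assms(5) idem have cb: "c * b = c"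
    by auto
  have "c * (a * b) = c * b * c"
    using eq by (simp add: mult.assoc)
  then have "c * a * b = c"
    using cb idem by (simp add: mult.assoc)
  with ca assms(7) have ca: "c * a = c"
    by auto
  have "a * b * a = b * (c * a)"
    using eq by (simp add: mult.assoc)
  then have "a = b * c"
    using ba ca idem by (simp add: mult.assoc)
  with assms(8) show False
    by simp
qed

lemma bridged_distinct:
  fixes a b c :: "'a::monoid_mult"
  assumes ab: "almost_breakable TYPE('a)"
    and "\<not> balanced a b" "\<not> balanced b c" "\<not> balanced a c" "a * c \<notin> {a * b, b * c}"
  shows "distinct [1, a, b, c, a * b, b * c, a * c]" and "a * (b * c) \<notin> {1, a, b, c}"
proof -
  have idem: "\<And>t::'a. t * t = t"
    using almost_breakable_idem[OF ab] .
  note left = band_mult_left_absorb[OF idem] and right = band_mult_right_absorb[OF idem]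
  have letters: "distinct [1, a, b, c]"
    using assms(2-4) unbalanced_neq_one almost_breakable_unbalanced_neq[OF ab] by auto
  have unbalanced: "a * b \<notin> {a, b}" "b * c \<notin> {b, c}" "a * c \<notin> {a, c}"
    using assms(2-4) unfolding balanced_def by auto
  have non_units: "a * b \<noteq> 1" "b * c \<noteq> 1" "a * c \<noteq> 1" "a * (b * c) \<noteq> 1"
    using letters band_mult_eq_one[OF idem] by auto
  have "a * b \<noteq> c"
    using left[of a b] unbalanced by auto
  moreover have "b * c \<noteq> a"
    using right[of b c] unbalanced by auto
  moreover have "a * c \<noteq> b"
    using left[of a c] unbalanced by auto
  moreover have "a * b \<noteq> b * c"
    using bridged_mult_neq[OF idem] almost_breakable_unbalanced_swap[OF ab] assms(2-4)
      unbalanced calculation by simp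
  moreover have "a * (b * c) \<noteq> a"
  proof
    assume "a * (b * c) = a"
    moreover have "a * (b * c) * c = a * (b * c)"
      using right[of "a * b" c] by (simp add: mult.assoc)
    ultimately show False
      using unbalanced by simp
  qed
  moreover have "a * (b * c) \<noteq> b"
    using left[of a "b * c"] unbalanced by auto
  moreover have "a * (b * c) \<noteq> c"
    using left[of a "b * c"] unbalanced by auto
  ultimately show "distinct [1, a, b, c, a * b, b * c, a * c]" and "a * (b * c) \<notin> {1, a, b, c}"
    using letters unbalanced non_units assms(5) by auto
qed

lemma bridged_pair_prods:
  fixes a b c :: "'a::monoid_mult"
  assumes idem: "\<And>t::'a. t * t = t"
    and "b * a \<in> {a, b}" "c * b \<in> {b, c}" "c * a \<in> {a, c}"
  shows "pair_prod [b, c, a, b] = {1, a, b, c, a * b, b * c}"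
    and "pair_prod [c, b * c, a, b] = {1, a, b, c, a * b, b * c}"
  using assms(2-4)
  by (auto simp: idem mult.assoc[symmetric]) (auto simp: mult.assoc idem)

lemma bridged_three_pair_prods:
  fixes a b c :: "'a::monoid_mult"
  assumes idem: "\<And>t::'a. t * t = t"
    and "b * a \<in> {a, b}" "c * b \<in> {b, c}" "c * a \<in> {a, c}"
    and "distinct [1, a, b, c, a * b, b * c, a * c]" "a * (b * c) \<notin> {1, a, b, c}"
  shows "\<forall>u1\<in>{a, b, c, b * c}. \<forall>u2\<in>{a, b, c, b * c}. \<forall>u3\<in>{a, b, c, b * c}.
    a * c \<in> pair_prod [u1, u2, u3] \<or> \<not> {a, b, c, a * b, b * c} \<subseteq> pair_prod [u1, u2, u3]"
proof -
  txt \<open>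
    Each of the three orientations is also stated for right-associated products, so that
    the simplifier can decide membership in all products case by case.
  \<close>
  have absorb: "y * x \<in> {x, y} \<Longrightarrow>
      (y * x = x \<and> (\<forall>z. y * (x * z) = x * z)) \<or> (y * x = y \<and> (\<forall>z. y * (x * z) = y * z))" for x y :: 'a
    by (auto simp: mult.assoc[symmetric])
  have idem': "t * (t * z) = t * z" for t z :: 'a
    by (simp add: mult.assoc[symmetric] idem)
  from assms(5,6) have neq:
    "a \<noteq> 1" "b \<noteq> 1" "c \<noteq> 1" "a * b \<noteq> 1" "b * c \<noteq> 1" "a * c \<noteq> 1"
    "a \<noteq> b" "a \<noteq> c" "b \<noteq> c" "a * b \<noteq> a" "a * b \<noteq> b" "a * b \<noteq> c"
    "b * c \<noteq> a" "b * c \<noteq> b" "b * c \<noteq> c" "a * c \<noteq> a" "a * c \<noteq> b" "a * c \<noteq> c"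
    "a * b \<noteq> b * c" "a * c \<noteq> a * b" "a * c \<noteq> b * c"
    "a * (b * c) \<noteq> 1" "a * (b * c) \<noteq> a" "a * (b * c) \<noteq> b" "a * (b * c) \<noteq> c"
    by auto
  from absorb[OF assms(2)] absorb[OF assms(3)] absorb[OF assms(4)] show ?thesis
    by (elim disjE conjE) (simp_all add: mult.assoc idem idem' neq neq[symmetric])
qed

lemma bridged_minimal_factorization:
  fixes a b c :: "'a::monoid_mult"
  assumes ab: "almost_breakable TYPE('a)"
    and bridge: "\<not> balanced a b" "\<not> balanced b c" "\<not> balanced a c" "a * c \<notin> {a * b, b * c}"
    and us: "pair_prod us = {1, a, b, c, a * b, b * c}" "set us \<subseteq> {a, b, c, b * c}" "length us = 4"
  shows "minimal_factorization Pfin1 setmult {1} (pair_word us) (pair_prod us)"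
proof (rule minimal_factorization_pair_wordI)
  have idem: "\<And>t::'a. t * t = t"
    using almost_breakable_idem[OF ab] .
  have swaps: "b * a \<in> {a, b}" "c * b \<in> {b, c}" "c * a \<in> {a, c}"
    using almost_breakable_unbalanced_swap[OF ab] bridge by auto
  note distinct = bridged_distinct[OF ab bridge]
  show "1 \<notin> set us"
    using us(2) distinct(1) by auto
  fix ts :: "'a list"
  assume ts: "set ts \<subseteq> set us" "length ts < length us" "card (pair_prod us) \<le> 2 ^ length ts"
  have "distinct [1, a, b, c, a * b, b * c]"
    using distinct(1) by simp
  then have "card (pair_prod us) = 6"
    using distinct_card unfolding us(1) by fastforce
  have "\<not> length ts \<le> 2"
  proof
    assume "length ts \<le> 2"
    then have "(2::nat) ^ length ts \<le> 2 ^ 2"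
      by (intro power_increasing) auto
    with ts(3) \<open>card (pair_prod us) = 6\<close> show False
      by simp
  qed
  with ts(2) us(3) have "length ts = 3"
    by linarith
  then obtain t1 t2 t3 where ts_eq: "ts = [t1, t2, t3]"
    by (auto simp: length_Suc_conv numeral_3_eq_3)
  then have "t1 \<in> {a, b, c, b * c}" "t2 \<in> {a, b, c, b * c}" "t3 \<in> {a, b, c, b * c}"
    using ts(1) us(2) by auto
  moreover have "a * c \<notin> pair_prod us"
    using distinct(1) unfolding us(1) by auto
  ultimately show "pair_prod ts \<noteq> pair_prod us"
    using bridged_three_pair_prods[OF idem swaps distinct] unfolding ts_eq us(1) by blast
qed

lemma bridged_not_UmF:
  fixes a b c :: "'a::monoid_mult"
  assumes ab: "almost_breakable TYPE('a)"
    and "\<not> balanced a b" "\<not> balanced b c" "\<not> balanced a c" "a * c \<notin> {a * b, b * c}"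
  shows "\<not> UmF (Pfin1 :: 'a set set) setmult {1}"
proof (rule not_UmF_Pfin1I)
  have "b * a \<in> {a, b}" "c * b \<in> {b, c}" "c * a \<in> {a, c}"
    using almost_breakable_unbalanced_swap[OF ab] assms(2-4) by auto
  note prods = bridged_pair_prods[OF almost_breakable_idem[OF ab] this]
  note distinct = bridged_distinct[OF assms]
  show "minimal_factorization Pfin1 setmult {1} (pair_word [b, c, a, b]) (pair_prod [b, c, a, b])"
    by (rule bridged_minimal_factorization[OF assms]) (use prods in auto)
  have "minimal_factorization Pfin1 setmult {1} (pair_word [c, b * c, a, b]) (pair_prod [c, b * c, a, b])"
    by (rule bridged_minimal_factorization[OF assms]) (use prods in auto)
  then show "minimal_factorization Pfin1 setmult {1} (pair_word [c, b * c, a, b]) (pair_prod [b, c, a, b])"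
    using prods by simp
  have "b * c \<notin> set [b, c, a, b]"
    using distinct(1) by auto
  then show "mset (pair_word [b, c, a, b]) \<noteq> mset (pair_word [c, b * c, a, b])"
    by (intro mset_pair_word_neq) auto
qed

theorem proposition4p5:
  assumes "almost_breakable TYPE('a::monoid_mult)"
    and "twisted TYPE('a) \<or> bridged TYPE('a)"
  shows "\<not> UmF (Pfin1 :: 'a set set) setmult {1}"
  using assms(2)
proof
  assume "twisted TYPE('a)"
  then show ?thesis
    unfolding twisted_def using twisted_not_UmF[OF assms(1)] by blast
next
  assume "bridged TYPE('a)"
  then show ?thesis
    unfolding bridged_def using bridged_not_UmF[OF assms(1)] by blast
qed

end
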